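(* Let $x\in\mathcal{X}$, $\delta\in[0,1]$ and $x'=\eta(x,\delta)$. Then $x'\in\mathcal{X}$ and $\|x'-x\|\le\delta$, with strict inequality when $\delta>0$. Furthermore, when $\delta>0$, $x'\notin\partial\mathcal{X}$.
   Context: Fix $D\ge1$, Euclidean norm $\|\cdot\|$ on $\mathbb{R}^D$. For $A\subseteq\mathbb{R}^D$ let $d(z,A)=\inf_{a\in A}\|z-a\|$, $\mathrm{Med}(A)=\{z:\exists p\neq q\in A,\ \|p-z\|=\|q-z\|=d(z,A)\}$, and reach $\tau_A=\inf_{a\in A}d(a,\mathrm{Med}(A))$. Let $\mathcal{X}'\subset\mathbb{R}^D$ be nonempty compact with reach $\tau_{\mathcal{X}'}>0$, fix $0<\epsilon_I<\min\{\tau_{\mathcal{X}'},1\}$, and set $\mathcal{X}=\{x\in\mathbb{R}^D:d(x,\mathcal{X}')\le\epsilon_I\}$. Let $\zeta\colon\mathcal{X}\to\mathcal{X}'$ map $x$ to the (unique) point $\zeta(x)\in\mathcal{X}'$ with $\|x-\zeta(x)\|=d(x,\mathcal{X}')$, and define $\eta\colon\mathcal{X}\times[0,1]\to\mathbb{R}^D$ by $\eta(x,\delta)=x+\delta(\zeta(x)-x)$. *)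

theory Defs
  imports "HOL-Analysis.Analysis"
begin

definition medial_axis :: "'a::euclidean_space set \<Rightarrow> 'a set" where
  "medial_axis A = {z. \<exists>p q. p \<in> A \<and> q \<in> A \<and> p \<noteq> q \<and>
      dist p z = infdist z A \<and> dist q z = infdist z A}"

text \<open>Reach, valued in the extended reals so that an empty medial axis gives infinite reach
  (inf over the empty set is +infinity, as in the paper).\<close>
definition reach :: "'a::euclidean_space set \<Rightarrow> ereal" where
  "reach A = (INF a\<in>A. INF m\<in>medial_axis A. ereal (dist a m))"

definition tube :: "real \<Rightarrow> 'a::euclidean_space set \<Rightarrow> 'a set" where
  "tube eps A = {x. infdist x A \<le> eps}"

definition proj :: "'a::euclidean_space set \<Rightarrow> 'a \<Rightarrow> 'a" where
  "proj A x = (THE y. y \<in> A \<and> dist x y = infdist x A)"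

definition eta :: "'a::euclidean_space set \<Rightarrow> 'a \<Rightarrow> real \<Rightarrow> 'a" where
  "eta A x \<delta> = x + \<delta> *\<^sub>R (proj A x - x)"

end

theory Submission
  imports Defs
begin

text \<open>Below the reach every point has a unique nearest point p in X', so eta moves x along
  the segment towards p: the step has length \<delta> d and the distance to X' drops to at most
  (1 - \<delta>) d, where d = infdist x X' \<le> eps < 1. For \<delta> > 0 the new distance is strictly
  below eps, which places the point in the open set {y. infdist y X' < eps} inside the tube.\<close>

lemma nearest_point_unique_below_reach:
  fixes A :: "'a::euclidean_space set"
  assumes "ereal (infdist x A) < reach A"
    and "p \<in> A" "dist x p = infdist x A"
    and "q \<in> A" "dist x q = infdist x A"
  shows "p = q"
proof (rule ccontr)
  assume "p \<noteq> q"
  then have "x \<in> medial_axis A"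
    using assms(2-5) unfolding medial_axis_def by (auto simp: dist_commute)
  then have "reach A \<le> ereal (dist p x)"
    unfolding reach_def using assms(2) by (meson INF_lower INF_lower2)
  with assms(1,3) show False by (simp add: dist_commute)
qed

lemma proj_nearest_below_reach:
  fixes A :: "'a::euclidean_space set"
  assumes "closed A" "A \<noteq> {}" "ereal (infdist x A) < reach A"
  shows "proj A x \<in> A" "dist x (proj A x) = infdist x A"
proof -
  obtain p where p: "p \<in> A" "infdist x A = dist x p"
    using infdist_attains_inf[OF assms(1,2)] by blast
  have "proj A x = p"
    unfolding proj_def
    using p nearest_point_unique_below_reach[OF assms(3)] by (intro the_equality) auto
  with p show "proj A x \<in> A" "dist x (proj A x) = infdist x A" by simp_all
qed

lemma norm_eta_diff: "norm (eta A x \<delta> - x) = \<bar>\<delta>\<bar> * dist x (proj A x)"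
  by (simp add: eta_def dist_norm norm_minus_commute)

lemma infdist_eta_le:
  assumes "proj A x \<in> A"
  shows "infdist (eta A x \<delta>) A \<le> \<bar>1 - \<delta>\<bar> * dist x (proj A x)"
proof -
  have "eta A x \<delta> - proj A x = (1 - \<delta>) *\<^sub>R (x - proj A x)"
    by (simp add: eta_def algebra_simps)
  then have "dist (eta A x \<delta>) (proj A x) = \<bar>1 - \<delta>\<bar> * dist x (proj A x)"
    by (simp add: dist_norm)
  then show ?thesis
    using infdist_le[OF assms, of "eta A x \<delta>"] by simp
qed

lemma not_in_frontier_tube:
  assumes "infdist y A < eps"
  shows "y \<notin> frontier (tube eps A)"
proof -
  have "open {z. infdist z A < eps}"
    by (rule open_Collect_less) (auto intro: continuous_intros)
  moreover have "{z. infdist z A < eps} \<subseteq> tube eps A"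
    unfolding tube_def by auto
  ultimately have "y \<in> interior (tube eps A)"
    using assms interior_maximal by blast
  then show ?thesis
    unfolding frontier_def by simp
qed

theorem lemma1:
  fixes X' :: "'a::euclidean_space set" and eps \<delta> :: real and x :: 'a
  assumes "X' \<noteq> {}" and "compact X'" and "reach X' > 0"
    and "0 < eps" and "ereal eps < reach X'" and "eps < 1"
    and "x \<in> tube eps X'" and "0 \<le> \<delta>" and "\<delta> \<le> 1"
  shows "eta X' x \<delta> \<in> tube eps X' \<and> norm (eta X' x \<delta> - x) \<le> \<delta> \<and>
         (\<delta> > 0 \<longrightarrow> norm (eta X' x \<delta> - x) < \<delta> \<and> eta X' x \<delta> \<notin> frontier (tube eps X'))"
proof -
  define d where "d = infdist x X'"
  have d: "0 \<le> d" "d \<le> eps"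
    using assms(7) by (auto simp: d_def tube_def infdist_nonneg)
  have "ereal d < reach X'"
    using d(2) assms(5) by (meson ereal_less_eq(3) order_le_less_trans)
  then have "proj X' x \<in> X'" "dist x (proj X' x) = d"
    using proj_nearest_below_reach[OF compact_imp_closed[OF assms(2)] assms(1)] d_def by auto
  then have step: "norm (eta X' x \<delta> - x) = \<delta> * d"
    and new_dist: "infdist (eta X' x \<delta>) X' \<le> (1 - \<delta>) * d"
    using norm_eta_diff infdist_eta_le assms(8,9) by (metis abs_of_nonneg diff_ge_0_iff_ge)+
  have "d < 1" "(1 - \<delta>) * d \<le> (1 - \<delta>) * eps"
    using d assms(6,9) by (auto intro: mult_left_mono)
  moreover have "(1 - \<delta>) * eps \<le> eps" "\<delta> * d \<le> \<delta>"
    using d assms(4,6,8) by (auto simp: algebra_simps intro: mult_left_le)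
  moreover have "(1 - \<delta>) * eps < eps" "\<delta> * d < \<delta>" if "\<delta> > 0"
    using that \<open>d < 1\<close> assms(4) by (auto simp: algebra_simps)
  ultimately have "infdist (eta X' x \<delta>) X' \<le> eps" "norm (eta X' x \<delta> - x) \<le> \<delta>"
    and "\<delta> > 0 \<Longrightarrow> norm (eta X' x \<delta> - x) < \<delta> \<and> infdist (eta X' x \<delta>) X' < eps"
    using step new_dist by linarith+
  then show ?thesis
    using not_in_frontier_tube unfolding tube_def by blast
qed

end
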